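(* Let $p,q,s,t$ be non-negative integers with $t\le s\le p+q$. Then \[ \binom{p+q+t}{s}\binom{s}{t}=\sum_{\substack{a+c=s,\ n+r=t\\ 0\le n\le a,\ 0\le r\le c}}\binom{p+n}{a}\binom{a}{n}\binom{q+r}{c}\binom{c}{r}\;-\;\sum_{\substack{a+c=s-1,\ n+r=t-1\\ 0\le n\le a,\ 0\le r\le c}}\binom{p+n}{a}\binom{a}{n}\binom{q+r}{c}\binom{c}{r}, \] where all summation indices are non-negative integers. *)

theory Defs
  imports Main
begin

text \<open>Summand of the identity, and the (finite) index set of quadruples (a,c,n,r)
  of natural numbers with a + c = S, n + r = T, n <= a, r <= c, where S, T are
  integers (so that S = s - 1, T = t - 1 may be negative, giving an empty sum).\<close>

definition idx :: "int \<Rightarrow> int \<Rightarrow> (nat \<times> nat \<times> nat \<times> nat) set" where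
  "idx S T = {(a, c, n, r). int a + int c = S \<and> int n + int r = T \<and> n \<le> a \<and> r \<le> c}"

definition term4 :: "nat \<Rightarrow> nat \<Rightarrow> nat \<times> nat \<times> nat \<times> nat \<Rightarrow> int" where
  "term4 p q x = (case x of (a, c, n, r) \<Rightarrow>
     int ((p + n) choose a) * int (a choose n) * int ((q + r) choose c) * int (c choose r))"

end

theory Submission
  imports Defs "HOL-Computational_Algebra.Formal_Power_Series"
begin

text \<open>Writing a = n + m and c = r + k, the trinomial revision
  C(p+n, n+m) C(n+m, n) = C(p+n, n) C(p, m) turns each summand over idx s t into a product
  C(p+n, n) C(q+r, r) \<cdot> C(p, m) C(q, k) with n + r = t and m + k = s - t.  The sum therefore
  factors, and the two factors are evaluated by the upper-index Vandermonde identity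
  (the ordinary one applied to negated upper indices) and by Vandermonde's identity:
  it equals C(p+q+1+t, t) C(p+q, s-t).  Subtracting the same expression for (s-1, t-1),
  Pascal's rule leaves C(p+q+t, t) C(p+q, s-t) = C(p+q+t, s) C(s, t).\<close>

lemma binomial_eq_negated_gbinomial:
  "of_nat ((p + n) choose n) = ((-1) ^ n * ((- of_nat p - 1) gchoose n) :: 'a::field_char_0)"
proof -
  have "of_nat ((p + n) choose n) = (of_nat (p + n) gchoose n :: 'a)"
    by (rule binomial_gbinomial)
  also have "\<dots> = (-1) ^ n * ((of_nat n - of_nat (p + n) - 1) gchoose n)"
    by (rule gbinomial_negated_upper)
  finally show ?thesis by simp
qed

lemma upper_Vandermonde:
  "(\<Sum>n\<le>t. ((p + n) choose n) * ((q + (t - n)) choose (t - n))) = (p + q + 1 + t) choose t"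
proof -
  have "(of_nat (\<Sum>n\<le>t. ((p + n) choose n) * ((q + (t - n)) choose (t - n))) :: rat)
      = (\<Sum>n\<le>t. (-1) ^ t * (((- of_nat p - 1) gchoose n) * ((- of_nat q - 1) gchoose (t - n))))"
    unfolding of_nat_sum of_nat_mult
  proof (rule sum.cong[OF refl])
    fix n assume "n \<in> {..t}"
    then have "(-1::rat) ^ t = (-1) ^ n * (-1) ^ (t - n)"
      by (metis le_add_diff_inverse atMost_iff power_add)
    then show "of_nat ((p + n) choose n) * of_nat ((q + (t - n)) choose (t - n))
        = (-1::rat) ^ t * (((- of_nat p - 1) gchoose n) * ((- of_nat q - 1) gchoose (t - n)))"
      by (simp add: binomial_eq_negated_gbinomial)
  qed
  also have "\<dots> = (-1) ^ t * ((- of_nat (p + q + 2)) gchoose t)"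
    by (simp add: sum_distrib_left[symmetric] atMost_atLeast0 gbinomial_Vandermonde
        algebra_simps)
  also have "\<dots> = ((-1) ^ t * (-1) ^ t) * ((of_nat (p + q + 2) + of_nat t - 1) gchoose t)"
    by (subst gbinomial_minus) (rule mult.assoc[symmetric])
  also have "\<dots> = of_nat ((p + q + 1 + t) choose t)"
    by (simp add: binomial_gbinomial add.assoc flip: power_mult_distrib)
  finally show ?thesis by (rule of_nat_eq_iff[THEN iffD1])
qed

lemma trinomial_revision:
  "((p + n) choose (n + m)) * ((n + m) choose n) = ((p + n) choose n) * (p choose m)"
proof (cases "m \<le> p")
  case True
  then show ?thesis using choose_mult[of n "n + m" "p + n"] by simp
next
  case False
  then show ?thesis by (simp add: binomial_eq_0)
qed

lemma idx_eq_image: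
  assumes "t \<le> s"
  shows "idx (int s) (int t) = (\<lambda>(n, m). (n + m, (t - n) + (s - t - m), n, t - n)) ` ({..t} \<times> {..s - t})"
  (is "_ = ?f ` _")
proof
  show "idx (int s) (int t) \<subseteq> ?f ` ({..t} \<times> {..s - t})"
  proof
    fix x assume "x \<in> idx (int s) (int t)"
    then obtain a c n r where x: "x = (a, c, n, r)" "a + c = s" "n + r = t" "n \<le> a" "r \<le> c"
      unfolding idx_def by auto
    then have "x = ?f (n, a - n)" and "(n, a - n) \<in> {..t} \<times> {..s - t}" by auto
    then show "x \<in> ?f ` ({..t} \<times> {..s - t})" by blast
  qed
  show "?f ` ({..t} \<times> {..s - t}) \<subseteq> idx (int s) (int t)"
    using assms unfolding idx_def by auto
qed

lemma sum_idx_term4: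
  assumes "t \<le> s"
  shows "(\<Sum>x\<in>idx (int s) (int t). term4 p q x)
    = int (((p + q + 1 + t) choose t) * ((p + q) choose (s - t)))"
proof -
  let ?f = "\<lambda>(n, m). (n + m, (t - n) + (s - t - m), n, t - n)"
  let ?A = "\<lambda>n. int (((p + n) choose n) * ((q + (t - n)) choose (t - n)))"
  let ?B = "\<lambda>m. int ((p choose m) * (q choose (s - t - m)))"
  have inj: "inj_on ?f ({..t} \<times> {..s - t})"
    unfolding inj_on_def by auto
  have summand: "term4 p q (n + m, (t - n) + (s - t - m), n, t - n) = ?A n * ?B m" for n m
    using trinomial_revision[of p n m] trinomial_revision[of q "t - n" "s - t - m"]
    unfolding term4_def by (simp add: algebra_simps flip: of_nat_mult)
  have "(\<Sum>x\<in>idx (int s) (int t). term4 p q x) = (\<Sum>(n, m)\<in>{..t} \<times> {..s - t}. ?A n * ?B m)"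
    unfolding idx_eq_image[OF assms] sum.reindex[OF inj] comp_def
    by (rule sum.cong[OF refl]) (auto simp only: summand split: prod.split)
  also have "\<dots> = (\<Sum>n\<le>t. ?A n) * (\<Sum>m\<le>s - t. ?B m)"
    unfolding sum_product sum.cartesian_product by (rule sum.cong) auto
  also have "\<dots> = int (((p + q + 1 + t) choose t) * ((p + q) choose (s - t)))"
    unfolding of_nat_sum[symmetric] upper_Vandermonde vandermonde by simp
  finally show ?thesis .
qed

theorem proposition4p1:
  fixes p q s t :: nat
  assumes "t \<le> s" and "s \<le> p + q"
  shows "int ((p + q + t) choose s) * int (s choose t)
         = (\<Sum>x\<in>idx (int s) (int t). term4 p q x)
           - (\<Sum>x\<in>idx (int s - 1) (int t - 1). term4 p q x)"
proof -
  have lhs: "int ((p + q + t) choose s) * int (s choose t)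
      = int ((p + q + t) choose t) * int ((p + q) choose (s - t))"
    using choose_mult[of t s "p + q + t"] assms by (simp flip: of_nat_mult)
  show ?thesis
  proof (cases t)
    case 0
    then have "idx (int s - 1) (int t - 1) = {}" unfolding idx_def by auto
    then show ?thesis using sum_idx_term4[OF assms(1), of p q] lhs 0 by simp
  next
    case (Suc t')
    with assms(1) obtain s' where s: "s = Suc s'" "t' \<le> s'" by (cases s) auto
    have shift: "int s - 1 = int s'" "int t - 1 = int t'" "s' - t' = s - t" using s Suc by auto
    have pascal: "(p + q + 1 + t) choose t = ((p + q + t) choose t) + ((p + q + 1 + t') choose t')"
      using Suc by simp
    show ?thesis
      unfolding lhs shift sum_idx_term4[OF assms(1)] sum_idx_term4[OF s(2)] pascal
      by (simp add: algebra_simps)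
  qed
qed

end
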